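(* Let $\rho:VB_n\to \mathrm{GL}_n(\mathbb{Z}[s]/(s^2))$ be the homomorphism defined on generators by $\rho(\sigma_i)=I_{i-1}\oplus\begin{pmatrix}0&1\\1&0\end{pmatrix}\oplus I_{n-i-1}$ and $\rho(\tau_i)=I_{i-1}\oplus\begin{pmatrix}s&1+s\\1-s&-s\end{pmatrix}\oplus I_{n-i-1}$. Then for every virtual braid $\beta\in VB_n$, $M(\beta)^T=\rho(\beta)$, where $M(\beta)$ is the bowling ball matrix of $\beta$ regarded as a virtual $n$-string link.
   Context: $VB_n$ is the virtual braid group on $n$ strands, generated by $\sigma_1,\dots,\sigma_{n-1}$ ($\sigma_i$ a positive real crossing between the strands in positions $i$ and $i+1$) and $\tau_1,\dots,\tau_{n-1}$ ($\tau_i$ a virtual crossing between positions $i$ and $i+1$), with strands oriented from top ($\mathbb{R}\times\{1\}$) to bottom ($\mathbb{R}\times\{0\}$). A word $g_1g_2\cdots g_k$ in the generators is represented by stacking the generator diagrams with $g_1$ at the bottom and $g_k$ at the top, so that $\rho(g_1\cdots g_k)=\rho(g_1)\cdots\rho(g_k)$; $s$ is a formal variable with $s^2=0$. Bowling ball matrix $M(L)$ of a virtual $n$-string link diagram $L$ (strings from $(i,1)$ to $(\pi(i),0)$, crossings real or virtual): a ball travels from a top endpoint along the orientation. At a real crossing it always continues along its strand (weight $1$). At a virtual crossing, rotated so both strands point downward, a ball arriving along the strand entering from the upper left jumps to the other strand with weight $s$ and continues with weight $1-s$; a ball arriving along the strand from the upper right jumps with weight $-s$ and continues with weight $1+s$.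 A path's weight is the product of these weights over the virtual crossings it passes, and $M(L)_{ij}$ is the sum in $\mathbb{Z}[s]/(s^2)$ of the weights of all paths from $(i,1)$ to $(j,0)$. *)

theory Defs
  imports "Jordan_Normal_Form.Matrix"
begin

text \<open>Dual a b represents a + b s, with s^2 = 0.\<close>
datatype dual = Dual (re: int) (eps: int)

instantiation dual :: comm_ring_1
begin
definition "0 = Dual 0 0"
definition "1 = Dual 1 0"
definition "x + y = Dual (re x + re y) (eps x + eps y)"
definition "x - y = Dual (re x - re y) (eps x - eps y)"
definition "- x = Dual (- re x) (- eps x)"
definition "x * y = Dual (re x * re y) (re x * eps y + eps x * re y)"
instance
  by standard (auto simp: zero_dual_def one_dual_def plus_dual_def minus_dual_def
      uminus_dual_def times_dual_def algebra_simps intro: dual.expand)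
end

definition s :: dual where "s = Dual 0 1"

lemma s_squared: "s * s = 0"
  by (simp add: s_def times_dual_def zero_dual_def)

text \<open>Generators: Sig i is sigma_i, Tau i is tau_i, with 1 <= i <= n-1; they act on
  strand positions i and i+1 (1-based), i.e. positions i-1 and i in the 0-based
  numbering 0..n-1 used below for positions and matrix indices.
  A word [g1,...,gk] is the diagram with g1 at the bottom and gk at the top.\<close>
datatype gen = Sig nat | Tau nat

definition gen_idx :: "gen \<Rightarrow> nat" where
  "gen_idx g = (case g of Sig i \<Rightarrow> i | Tau i \<Rightarrow> i)"

definition valid_word :: "nat \<Rightarrow> gen list \<Rightarrow> bool" where
  "valid_word n w \<longleftrightarrow> (\<forall>g\<in>set w. 1 \<le> gen_idx g \<and> gen_idx g < n)"

definition rho_gen :: "nat \<Rightarrow> gen \<Rightarrow> dual mat" where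
  "rho_gen n g = mat n n (\<lambda>(a, b).
     (case g of
        Sig i \<Rightarrow>
          (if a = i - 1 \<and> b = i then 1
           else if a = i \<and> b = i - 1 then 1
           else if (a = i - 1 \<or> a = i) then 0
           else if a = b then 1 else 0)
      | Tau i \<Rightarrow>
          (if a = i - 1 \<and> b = i - 1 then s
           else if a = i - 1 \<and> b = i then 1 + s
           else if a = i \<and> b = i - 1 then 1 - s
           else if a = i \<and> b = i then - s
           else if (a = i - 1 \<or> a = i) then 0
           else if a = b then 1 else 0)))"

definition rho :: "nat \<Rightarrow> gen list \<Rightarrow> dual mat" where
  "rho n w = foldr (\<lambda>g A. rho_gen n g * A) w (1\<^sub>m n)"

text \<open>Crossing g at one level: a ball entering at top position p can leave at bottom
  position q (0-based positions).  At a real crossing sigma_i the ball follows its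
  strand (positions i-1 and i are exchanged).  At a virtual crossing tau_i the ball
  either continues along its strand (exchange of positions) or jumps to the other
  strand (stays at its position).\<close>
definition bb_step :: "gen \<Rightarrow> nat \<Rightarrow> nat \<Rightarrow> bool" where
  "bb_step g p q = (case g of
     Sig i \<Rightarrow> (if p = i - 1 then q = i else if p = i then q = i - 1 else q = p)
   | Tau i \<Rightarrow> (if p = i - 1 then q = i \<or> q = i - 1
               else if p = i then q = i - 1 \<or> q = i else q = p))"

definition bb_weight :: "gen \<Rightarrow> nat \<Rightarrow> nat \<Rightarrow> dual" where
  "bb_weight g p q = (case g of
     Sig i \<Rightarrow> 1
   | Tau i \<Rightarrow> (if p = i - 1 then (if q = i - 1 then s else 1 - s)
               else if p = i then (if q = i then - s else 1 + s) else 1))"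

text \<open>A path from (i,1) to (j,0) through the diagram of w = [g1,...,gk] is a list ps of
  positions of length k+1, where ps!l is the position just below level l (generator
  w!l), so ps!0 = j is the bottom endpoint and ps!k = i the top endpoint, and each
  generator w!l moves the ball from ps!(l+1) to ps!l.\<close>
definition bb_paths :: "nat \<Rightarrow> gen list \<Rightarrow> nat \<Rightarrow> nat \<Rightarrow> nat list set" where
  "bb_paths n w i j = {ps. length ps = Suc (length w) \<and> set ps \<subseteq> {..<n} \<and>
       ps ! length w = i \<and> ps ! 0 = j \<and>
       (\<forall>l < length w. bb_step (w ! l) (ps ! Suc l) (ps ! l))}"

definition bb_path_weight :: "gen list \<Rightarrow> nat list \<Rightarrow> dual" where
  "bb_path_weight w ps = (\<Prod>l < length w. bb_weight (w ! l) (ps ! Suc l) (ps ! l))"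

definition bowling_ball_matrix :: "nat \<Rightarrow> gen list \<Rightarrow> dual mat" where
  "bowling_ball_matrix n w =
     mat n n (\<lambda>(i, j). \<Sum>ps \<in> bb_paths n w i j. bb_path_weight w ps)"

end

theory Submission
  imports Defs
begin

text \<open>Reading a word from the bottom, a path through \<open>g # w\<close> is a first move through the
  crossing \<open>g\<close> followed by a path through \<open>w\<close>, and its weight factors accordingly.
  Hence the bowling ball matrix is multiplicative under stacking,
  \<open>M(g # w) = M(w) M([g])\<close>, and the \<open>(a, c)\<close> entry of \<open>rho_gen n g\<close> is exactly the weight
  of the one-step move from top position \<open>c\<close> to bottom position \<open>a\<close> (zero if that move is
  not allowed), i.e. \<open>M([g]) = rho_gen n g\<^sup>T\<close>.\<close>

definition bb_path_sum :: "nat \<Rightarrow> gen list \<Rightarrow> nat \<Rightarrow> nat \<Rightarrow> dual" where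
  "bb_path_sum n w i j = (\<Sum>ps \<in> bb_paths n w i j. bb_path_weight w ps)"

lemma bowling_ball_matrix_carrier: "bowling_ball_matrix n w \<in> carrier_mat n n"
  by (simp add: bowling_ball_matrix_def)

lemma bowling_ball_matrix_index:
  "i < n \<Longrightarrow> j < n \<Longrightarrow> bowling_ball_matrix n w $$ (i, j) = bb_path_sum n w i j"
  by (simp add: bowling_ball_matrix_def bb_path_sum_def)

lemma rho_gen_carrier: "rho_gen n g \<in> carrier_mat n n"
  by (simp add: rho_gen_def)

lemma rho_gen_index:
  assumes "a < n" "c < n"
  shows "rho_gen n g $$ (a, c) = (if bb_step g c a then bb_weight g c a else 0)"
  using assms
  by (cases g; cases "a = gen_idx g - 1"; cases "a = gen_idx g";
      cases "c = gen_idx g - 1"; cases "c = gen_idx g"; cases "a = c")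
     (simp_all add: rho_gen_def bb_step_def bb_weight_def gen_idx_def)

lemma finite_bb_paths: "finite (bb_paths n w i j)"
proof (rule finite_subset)
  show "bb_paths n w i j \<subseteq> {ps. set ps \<subseteq> {..<n} \<and> length ps = Suc (length w)}"
    unfolding bb_paths_def by auto
qed (simp add: finite_lists_length_eq)

lemma bb_paths_Nil: "bb_paths n [] i j = (if i = j \<and> j < n then {[j]} else {})"
  by (auto simp: bb_paths_def length_Suc_conv)

lemma bb_paths_Cons:
  assumes "a < n"
  shows "bb_paths n (g # w) b a =
    (#) a ` (\<Union>c \<in> {c \<in> {..<n}. bb_step g c a}. bb_paths n w b c)"
proof (intro equalityI subsetI)
  fix ps assume ps: "ps \<in> bb_paths n (g # w) b a"
  then obtain ps' where "ps = a # ps'" "ps' \<noteq> []"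
    unfolding bb_paths_def by (cases ps) (auto simp: length_Suc_conv)
  with ps have "ps' \<in> bb_paths n w b (ps' ! 0)" "ps' ! 0 < n" "bb_step g (ps' ! 0) a"
    unfolding bb_paths_def by (auto simp: All_less_Suc2 subset_iff)
  with \<open>ps = a # ps'\<close>
  show "ps \<in> (#) a ` (\<Union>c \<in> {c \<in> {..<n}. bb_step g c a}. bb_paths n w b c)"
    by blast
next
  fix ps assume "ps \<in> (#) a ` (\<Union>c \<in> {c \<in> {..<n}. bb_step g c a}. bb_paths n w b c)"
  with assms show "ps \<in> bb_paths n (g # w) b a"
    unfolding bb_paths_def by (auto simp: less_Suc_eq_0_disj)
qed

lemma bb_path_weight_Cons:
  "bb_path_weight (g # w) (a # ps) = bb_weight g (ps ! 0) a * bb_path_weight w ps"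
  unfolding bb_path_weight_def
  by (simp add: prod.lessThan_Suc_shift del: prod.lessThan_Suc)

lemma bb_path_sum_Cons:
  assumes "a < n"
  shows "bb_path_sum n (g # w) b a = (\<Sum>c<n. rho_gen n g $$ (a, c) * bb_path_sum n w b c)"
proof -
  let ?C = "{c \<in> {..<n}. bb_step g c a}"
  have "bb_path_sum n (g # w) b a =
      (\<Sum>ps \<in> (\<Union>c \<in> ?C. bb_paths n w b c). bb_path_weight (g # w) (a # ps))"
    unfolding bb_path_sum_def bb_paths_Cons[OF assms] by (simp add: sum.reindex)
  also have "\<dots> = (\<Sum>c \<in> ?C. \<Sum>ps \<in> bb_paths n w b c. bb_path_weight (g # w) (a # ps))"
  proof (rule sum.UNION_disjoint)
    show "\<forall>c \<in> ?C. \<forall>d \<in> ?C. c \<noteq> d \<longrightarrow> bb_paths n w b c \<inter> bb_paths n w b d = {}"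
      by (auto simp: bb_paths_def)
  qed (simp_all add: finite_bb_paths)
  also have "\<dots> = (\<Sum>c \<in> ?C. bb_weight g c a * bb_path_sum n w b c)"
    unfolding bb_path_sum_def bb_path_weight_Cons sum_distrib_left
    by (intro sum.cong refl) (auto simp: bb_paths_def)
  also have "\<dots> = (\<Sum>c<n. if bb_step g c a then bb_weight g c a * bb_path_sum n w b c else 0)"
    by (rule sum.inter_filter) simp
  also have "\<dots> = (\<Sum>c<n. rho_gen n g $$ (a, c) * bb_path_sum n w b c)"
    by (intro sum.cong) (simp_all add: rho_gen_index assms)
  finally show ?thesis .
qed

lemma bowling_ball_matrix_Nil: "bowling_ball_matrix n [] = 1\<^sub>m n"
  by (rule eq_matI) (auto simp: bowling_ball_matrix_def bb_paths_Nil bb_path_weight_def)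

lemma bowling_ball_matrix_Cons:
  "bowling_ball_matrix n (g # w) = bowling_ball_matrix n w * transpose_mat (rho_gen n g)"
proof (rule eq_matI)
  fix b a assume "b < dim_row (bowling_ball_matrix n w * transpose_mat (rho_gen n g))"
    "a < dim_col (bowling_ball_matrix n w * transpose_mat (rho_gen n g))"
  then have "b < n" "a < n"
    by (simp_all add: carrier_matD[OF rho_gen_carrier] carrier_matD[OF bowling_ball_matrix_carrier])
  then show "bowling_ball_matrix n (g # w) $$ (b, a) =
      (bowling_ball_matrix n w * transpose_mat (rho_gen n g)) $$ (b, a)"
    by (simp add: bowling_ball_matrix_index bb_path_sum_Cons scalar_prod_def atLeast0LessThan
        mult.commute carrier_matD[OF rho_gen_carrier] carrier_matD[OF bowling_ball_matrix_carrier])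
qed (simp_all add: carrier_matD[OF rho_gen_carrier] carrier_matD[OF bowling_ball_matrix_carrier])

lemma transpose_bowling_ball_matrix: "transpose_mat (bowling_ball_matrix n w) = rho n w"
proof (induction w)
  case Nil
  show ?case by (simp add: bowling_ball_matrix_Nil rho_def)
next
  case (Cons g w)
  have "transpose_mat (bowling_ball_matrix n (g # w)) =
      rho_gen n g * transpose_mat (bowling_ball_matrix n w)"
    using transpose_mult[OF bowling_ball_matrix_carrier[of n w], of "transpose_mat (rho_gen n g)" n]
    by (simp add: bowling_ball_matrix_Cons rho_gen_carrier)
  with Cons.IH show ?case by (simp add: rho_def)
qed

theorem theorem4p1:
  fixes n :: nat and w :: "gen list"
  assumes "valid_word n w"
  shows "transpose_mat (bowling_ball_matrix n w) = rho n w"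
  by (rule transpose_bowling_ball_matrix)

end
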